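(* Let $k \ge 1$ and $m \in \{4k+3, 4k+5\}$, $\theta = 2\pi/m$. Then the $\theta_m$-graph on any finite point set in general position is a $\dfrac{\cos(\theta/4)}{\cos(\theta/2) - \sin(3\theta/4)}$-spanner.
   Context: Cones: for $m \ge 2$, $\theta = 2\pi/m$; around each point $u$ draw $m$ rays with consecutive angular separation $\theta$, oriented so the vertical upward ray from $u$ bisects a cone $C_0^u$; cones numbered clockwise, same orientation at every point. General position: no two points on a line parallel to a cone boundary ray, no two on a line perpendicular to a cone bisector, no three collinear. The $\theta_m$-graph on $P$: for each $u\in P$ and each cone $C_i^u$ containing another point of $P$, add an edge from $u$ to the point of $C_i^u$ whose orthogonal projection onto the bisector of $C_i^u$ is closest to $u$; edges weighted by Euclidean length. A graph $H$ on $P$ is a $t$-spanner if $\delta_H(u,w)\le t|uw|$ for all $u,w\in P$. *)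

theory Defs
  imports "HOL-Analysis.Analysis"
begin

type_synonym point = "real \<times> real"

definition theta :: "nat \<Rightarrow> real" where
  "theta m = 2 * pi / real m"

text \<open>Cone i at u (i < m): directions whose clockwise angle from the upward vertical
  lies in [(i - 1/2) theta, (i + 1/2) theta). Cone 0 is bisected by the upward ray;
  cones are numbered clockwise. Direction at clockwise angle phi is (sin phi, cos phi).\<close>
definition in_cone :: "nat \<Rightarrow> point \<Rightarrow> nat \<Rightarrow> point \<Rightarrow> bool" where
  "in_cone m u i v \<longleftrightarrow>
     (\<exists>r phi. r > 0 \<and> (real i - 1/2) * theta m \<le> phi \<and> phi < (real i + 1/2) * theta m \<and>
        v = (fst u + r * sin phi, snd u + r * cos phi))"

text \<open>Signed length of the orthogonal projection of v - u onto the bisector of cone i.\<close>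
definition bis_proj :: "nat \<Rightarrow> point \<Rightarrow> nat \<Rightarrow> point \<Rightarrow> real" where
  "bis_proj m u i v = (fst v - fst u) * sin (real i * theta m) + (snd v - snd u) * cos (real i * theta m)"

definition theta_arc :: "nat \<Rightarrow> point set \<Rightarrow> point \<Rightarrow> point \<Rightarrow> bool" where
  "theta_arc m P u v \<longleftrightarrow> u \<in> P \<and> v \<in> P \<and>
     (\<exists>i<m. in_cone m u i v \<and> (\<forall>w\<in>P. in_cone m u i w \<longrightarrow> bis_proj m u i v \<le> bis_proj m u i w))"

definition theta_graph :: "nat \<Rightarrow> point set \<Rightarrow> point \<Rightarrow> point \<Rightarrow> bool" where
  "theta_graph m P u v \<longleftrightarrow> theta_arc m P u v \<or> theta_arc m P v u"

definition general_position :: "nat \<Rightarrow> point set \<Rightarrow> bool" where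
  "general_position m P \<longleftrightarrow>
     (\<forall>p\<in>P. \<forall>q\<in>P. p \<noteq> q \<longrightarrow>
        (\<forall>j<m. (fst p - fst q) * cos ((2 * real j + 1) * theta m / 2)
               - (snd p - snd q) * sin ((2 * real j + 1) * theta m / 2) \<noteq> 0) \<and>
        (\<forall>i<m. (fst p - fst q) * sin (real i * theta m)
               + (snd p - snd q) * cos (real i * theta m) \<noteq> 0)) \<and>
     (\<forall>p\<in>P. \<forall>q\<in>P. \<forall>r\<in>P. p \<noteq> q \<and> q \<noteq> r \<and> p \<noteq> r \<longrightarrow>
        (fst q - fst p) * (snd r - snd p) - (snd q - snd p) * (fst r - fst p) \<noteq> 0)"

definition is_spanner :: "(point \<Rightarrow> point \<Rightarrow> bool) \<Rightarrow> point set \<Rightarrow> real \<Rightarrow> bool" where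
  "is_spanner H P t \<longleftrightarrow>
     (\<forall>u\<in>P. \<forall>w\<in>P. \<exists>xs. xs \<noteq> [] \<and> hd xs = u \<and> last xs = w \<and>
        (\<forall>j < length xs - 1. H (xs ! j) (xs ! Suc j)) \<and>
        (\<Sum>j < length xs - 1. dist (xs ! j) (xs ! Suc j)) \<le> t * dist u w)"

end

theory Submission
  imports Defs
begin

(* Call a step from u towards w "greedy" if u has a graph neighbour v <> u with
   |uv| + t |vw| <= t |uw|.  If for every pair of distinct points a greedy step exists from u
   towards w or from w towards u, then induction on |uw| (over the finitely many pair distances)
   yields a u-w path of length at most t |uw|.
   For odd m the direction opposite to a cone boundary is a cone bisector, so for any pair one
   endpoint sees the other within angle th/4 of the bisector of one of its cones.  In that
   situation the theta-edge v chosen in that cone satisfies the greedy inequality: rotating the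
   cone bisector to the vertical, v lies in a cone of half-angle th/2, w in one of half-angle
   th/4, v is not higher than w, and an elementary estimate (cone_step_inequality) applies
   precisely because t solves cos(th/4) + t sin(3th/4) = t cos(th/2). *)

fun is_walk :: "('a \<Rightarrow> 'a \<Rightarrow> bool) \<Rightarrow> 'a list \<Rightarrow> bool" where
  "is_walk H (x # y # zs) \<longleftrightarrow> H x y \<and> is_walk H (y # zs)"
| "is_walk H _ \<longleftrightarrow> True"

fun walk_length :: "'a::metric_space list \<Rightarrow> real" where
  "walk_length (x # y # zs) = dist x y + walk_length (y # zs)"
| "walk_length _ = 0"

lemma is_walk_iff_nth: "is_walk H xs \<longleftrightarrow> (\<forall>j < length xs - 1. H (xs ! j) (xs ! Suc j))"
proof (induction H xs rule: is_walk.induct)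
  case (1 H x y zs)
  then show ?case by (simp add: All_less_Suc2)
qed auto

lemma walk_length_eq_sum: "walk_length xs = (\<Sum>j < length xs - 1. dist (xs ! j) (xs ! Suc j))"
proof (induction xs rule: walk_length.induct)
  case (1 x y zs)
  then show ?case by (simp add: sum.lessThan_Suc_shift del: sum.lessThan_Suc)
qed auto

lemma is_walk_Cons: "ys \<noteq> [] \<Longrightarrow> is_walk H (x # ys) \<longleftrightarrow> H x (hd ys) \<and> is_walk H ys"
  by (cases ys) auto

lemma walk_length_Cons: "ys \<noteq> [] \<Longrightarrow> walk_length (x # ys) = dist x (hd ys) + walk_length ys"
  by (cases ys) auto

lemma is_walk_snoc: "xs \<noteq> [] \<Longrightarrow> is_walk H xs \<Longrightarrow> H (last xs) z \<Longrightarrow> is_walk H (xs @ [z])"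
  by (induction H xs rule: is_walk.induct) auto

lemma walk_length_snoc: "xs \<noteq> [] \<Longrightarrow> walk_length (xs @ [z]) = walk_length xs + dist (last xs) z"
  by (induction xs rule: walk_length.induct) auto

definition short_walk :: "('a::metric_space \<Rightarrow> 'a \<Rightarrow> bool) \<Rightarrow> real \<Rightarrow> 'a \<Rightarrow> 'a \<Rightarrow> bool" where
  "short_walk H t u w \<longleftrightarrow>
     (\<exists>xs. xs \<noteq> [] \<and> hd xs = u \<and> last xs = w \<and> is_walk H xs \<and> walk_length xs \<le> t * dist u w)"

lemma is_spanner_iff_short_walks:
  fixes H :: "point \<Rightarrow> point \<Rightarrow> bool"
  shows "is_spanner H P t \<longleftrightarrow> (\<forall>u\<in>P. \<forall>w\<in>P. short_walk H t u w)"
  unfolding is_spanner_def short_walk_def is_walk_iff_nth walk_length_eq_sum ..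

lemma finite_dist_induct:
  fixes P :: "'a::metric_space set"
  assumes "finite P" and "u \<in> P" and "w \<in> P"
    and step: "\<And>u w. u \<in> P \<Longrightarrow> w \<in> P \<Longrightarrow>
        (\<And>a b. a \<in> P \<Longrightarrow> b \<in> P \<Longrightarrow> dist a b < dist u w \<Longrightarrow> Q a b) \<Longrightarrow> Q u w"
  shows "Q u w"
  using assms(2,3)
proof (induction "card {p \<in> P \<times> P. dist (fst p) (snd p) < dist u w}" arbitrary: u w rule: less_induct)
  case less
  let ?below = "\<lambda>d. {p \<in> P \<times> P. dist (fst p) (snd p) < d}"
  show ?case
  proof (rule step[OF less.prems])
    fix a b assume ab: "a \<in> P" "b \<in> P" "dist a b < dist u w"
    have "?below (dist a b) \<subseteq> ?below (dist u w)" using ab by auto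
    moreover have "(a, b) \<in> ?below (dist u w)" "(a, b) \<notin> ?below (dist a b)" using ab by auto
    ultimately have "?below (dist a b) \<subset> ?below (dist u w)" by blast
    then have "card (?below (dist a b)) < card (?below (dist u w))"
      using \<open>finite P\<close> by (intro psubset_card_mono) auto
    then show "Q a b" using less.hyps ab by blast
  qed
qed

definition greedy_step :: "('a::metric_space \<Rightarrow> 'a \<Rightarrow> bool) \<Rightarrow> 'a set \<Rightarrow> real \<Rightarrow> 'a \<Rightarrow> 'a \<Rightarrow> bool" where
  "greedy_step H P t u w \<longleftrightarrow> (\<exists>v\<in>P. v \<noteq> u \<and> H u v \<and> dist u v + t * dist v w \<le> t * dist u w)"

lemma greedy_step_spanner:
  fixes H :: "point \<Rightarrow> point \<Rightarrow> bool"
  assumes "finite P" and "t > 0"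
    and sym: "\<And>a b. H a b \<Longrightarrow> H b a"
    and step: "\<And>u w. u \<in> P \<Longrightarrow> w \<in> P \<Longrightarrow> u \<noteq> w \<Longrightarrow> greedy_step H P t u w \<or> greedy_step H P t w u"
  shows "is_spanner H P t"
  unfolding is_spanner_iff_short_walks
proof (intro ballI)
  fix u w assume "u \<in> P" "w \<in> P"
  then show "short_walk H t u w"
  proof (rule finite_dist_induct[OF \<open>finite P\<close>])
    fix u w assume uw: "u \<in> P" "w \<in> P"
      and IH: "\<And>a b. a \<in> P \<Longrightarrow> b \<in> P \<Longrightarrow> dist a b < dist u w \<Longrightarrow> short_walk H t a b"
    have shorter: "dist a b < dist u w" if "dist c a + t * dist a b \<le> t * dist u w" "a \<noteq> c" for a b c
    proof -
      have "0 < dist c a" using that(2) by simp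
      then have "t * dist a b < t * dist u w" using that(1) by linarith
      then show ?thesis using \<open>t > 0\<close> by simp
    qed
    consider "u = w" | "greedy_step H P t u w" | "greedy_step H P t w u" using step uw by blast
    then show "short_walk H t u w"
    proof cases
      case 1
      then show ?thesis unfolding short_walk_def by (intro exI[of _ "[u]"]) simp
    next
      case 2
      then obtain v where v: "v \<in> P" "v \<noteq> u" "H u v" "dist u v + t * dist v w \<le> t * dist u w"
        unfolding greedy_step_def by blast
      have "dist v w < dist u w" using shorter[of u v w] v by simp
      then obtain ys where ys: "ys \<noteq> []" "hd ys = v" "last ys = w" "is_walk H ys"
          "walk_length ys \<le> t * dist v w"
        using IH uw v unfolding short_walk_def by blast
      then show ?thesis unfolding short_walk_def using v
        by (intro exI[of _ "u # ys"]) (simp add: is_walk_Cons walk_length_Cons)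
    next
      case 3
      then obtain z where z: "z \<in> P" "z \<noteq> w" "H w z" "dist w z + t * dist z u \<le> t * dist w u"
        unfolding greedy_step_def by blast
      have "dist u z < dist u w" using shorter[of w z u] z by (simp add: dist_commute)
      then obtain ys where ys: "ys \<noteq> []" "hd ys = u" "last ys = z" "is_walk H ys"
          "walk_length ys \<le> t * dist u z"
        using IH uw z unfolding short_walk_def by blast
      then show ?thesis unfolding short_walk_def using z sym
        by (intro exI[of _ "ys @ [w]"]) (simp add: is_walk_snoc walk_length_snoc dist_commute)
    qed
  qed
qed

definition polar :: "point \<Rightarrow> real \<Rightarrow> real \<Rightarrow> point" where
  "polar u r \<phi> = (fst u + r * sin \<phi>, snd u + r * cos \<phi>)"

(* Law of cosines; in particular distances are invariant under a common rotation. *)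
lemma dist_polar_polar:
  "dist (polar u r p) (polar u R q) = sqrt (r\<^sup>2 + R\<^sup>2 - 2 * r * R * cos (p - q))"
proof -
  have "(r * sin p - R * sin q)\<^sup>2 + (r * cos p - R * cos q)\<^sup>2
      = r\<^sup>2 * ((sin p)\<^sup>2 + (cos p)\<^sup>2) + R\<^sup>2 * ((sin q)\<^sup>2 + (cos q)\<^sup>2) - 2 * r * R * cos (p - q)"
    by (simp only: cos_diff power2_eq_square, algebra)
  then show ?thesis by (simp add: polar_def dist_Pair_Pair dist_real_def)
qed

lemma dist_polar_center: "dist u (polar u r p) = \<bar>r\<bar>"
proof -
  have "(r * sin p)\<^sup>2 + (r * cos p)\<^sup>2 = r\<^sup>2" by (simp add: power_mult_distrib flip: distrib_left)
  then show ?thesis by (cases u) (simp add: polar_def dist_Pair_Pair dist_real_def)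
qed

lemma dist_polar_rotate:
  "dist (polar u r p) (polar u R q) = dist (polar c r (p - \<beta>)) (polar c R (q - \<beta>))"
  by (simp add: dist_polar_polar)

lemma polar_exists:
  assumes "u \<noteq> w"
  shows "\<exists>R>0. \<exists>\<phi>. w = polar u R \<phi>"
proof -
  define dx where "dx = fst w - fst u"
  define dy where "dy = snd w - snd u"
  define R where "R = sqrt (dx\<^sup>2 + dy\<^sup>2)"
  have "dx \<noteq> 0 \<or> dy \<noteq> 0" using assms by (auto simp: dx_def dy_def prod_eq_iff)
  then have pos: "0 < dx\<^sup>2 + dy\<^sup>2" using sum_power2_gt_zero_iff by blast
  then have R: "R > 0" by (simp add: R_def)
  have "R\<^sup>2 = dx\<^sup>2 + dy\<^sup>2" using pos by (simp add: R_def)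
  have "(dy / R)\<^sup>2 + (dx / R)\<^sup>2 = (dx\<^sup>2 + dy\<^sup>2) / R\<^sup>2"
    by (simp add: power_divide add_divide_distrib)
  also have "\<dots> = R\<^sup>2 / R\<^sup>2" using \<open>R\<^sup>2 = dx\<^sup>2 + dy\<^sup>2\<close> by simp
  also have "\<dots> = 1" using R by simp
  finally have "(dy / R)\<^sup>2 + (dx / R)\<^sup>2 = 1" .
  then obtain \<phi> where "dy / R = cos \<phi>" "dx / R = sin \<phi>" by (rule sincos_total_2pi) auto
  then have "w = polar u R \<phi>"
    using R by (simp add: polar_def prod_eq_iff dx_def dy_def field_simps)
  then show ?thesis using R by blast
qed

lemma polar_opposite: "w = polar u R \<phi> \<Longrightarrow> u = polar w R (\<phi> + pi)"
  by (simp add: polar_def)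

lemma polar_periodic: "polar u R (\<phi> + 2 * pi * of_int n) = polar u R \<phi>"
  using sin_int_2pin[of n] cos_int_2pin[of n] by (simp add: polar_def sin_add cos_add)

lemma bis_proj_polar: "bis_proj m u i (polar u r \<phi>) = r * cos (\<phi> - real i * theta m)"
  unfolding bis_proj_def polar_def by (simp add: cos_diff algebra_simps)

lemma theta_times_m: "m > 0 \<Longrightarrow> real m * theta m = 2 * pi"
  by (simp add: theta_def)

(* w lies within angle th/4 of the bisector of cone i of u; these are the cones in which the
   greedy inequality is guaranteed. *)
definition near_bisector :: "nat \<Rightarrow> point \<Rightarrow> nat \<Rightarrow> point \<Rightarrow> bool" where
  "near_bisector m u i w \<longleftrightarrow>
     (\<exists>R>0. \<exists>\<phi>. \<bar>\<phi> - real i * theta m\<bar> \<le> theta m / 4 \<and> w = polar u R \<phi>)"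

lemma near_bisector_in_cone:
  assumes "m > 0" and "near_bisector m u i w"
  shows "in_cone m u i w"
proof -
  obtain R \<phi> where "R > 0" "\<bar>\<phi> - real i * theta m\<bar> \<le> theta m / 4" "w = polar u R \<phi>"
    using assms(2) unfolding near_bisector_def by blast
  moreover have "(real i - 1/2) * theta m \<le> \<phi> \<and> \<phi> < (real i + 1/2) * theta m"
  proof -
    have "theta m > 0" using assms(1) by (simp add: theta_def)
    moreover have "\<phi> - real i * theta m \<le> theta m / 4 \<and> - (\<phi> - real i * theta m) \<le> theta m / 4"
      using \<open>\<bar>\<phi> - real i * theta m\<bar> \<le> theta m / 4\<close> by (simp only: abs_le_iff)
    ultimately show ?thesis by (simp add: algebra_simps)
  qed
  ultimately show ?thesis unfolding in_cone_def polar_def by blast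
qed

lemma near_bisector_mod:
  assumes "m > 0" and "R > 0" and "\<bar>e\<bar> \<le> theta m / 4"
  shows "\<exists>i<m. near_bisector m c i (polar c R (of_int s * theta m + e))"
proof -
  define i where "i = nat (s mod int m)"
  have i: "i < m" "int i = s mod int m" using assms(1) by (auto simp: i_def nat_less_iff)
  have "s = int i + int m * (s div int m)" using i(2) by simp
  then have "(of_int s :: real) = of_int (int i + int m * (s div int m))" by (rule arg_cong)
  then have "of_int s * theta m + e = (real i * theta m + e) + (real m * theta m) * of_int (s div int m)"
    by (simp add: algebra_simps)
  also have "\<dots> = (real i * theta m + e) + 2 * pi * of_int (s div int m)"
    using theta_times_m[OF assms(1)] by simp
  finally have "polar c R (of_int s * theta m + e) = polar c R (real i * theta m + e)"
    by (simp only: polar_periodic)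
  moreover have "\<bar>(real i * theta m + e) - real i * theta m\<bar> \<le> theta m / 4" using assms(3) by simp
  ultimately show ?thesis using i(1) assms(2) unfolding near_bisector_def by metis
qed

(* For odd m, pi = (m div 2 + 1/2) th, so turning a direction by pi moves its offset from the
   nearest bisector by th/2.  Hence one of u, w is near a bisector as seen from the other. *)
lemma near_bisector_either:
  assumes "odd m" and "u \<noteq> w"
  shows "\<exists>i<m. near_bisector m u i w \<or> near_bisector m w i u"
proof -
  define \<theta> where "\<theta> = theta m"
  have m: "m > 0" using assms(1) by (intro odd_pos)
  have \<theta>: "\<theta> > 0" using m by (simp add: \<theta>_def theta_def)
  obtain h where h: "m = 2 * h + 1" using assms(1) oddE by blast
  have pi_eq: "pi = of_int (int h) * \<theta> + \<theta> / 2"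
    using theta_times_m[OF m] by (simp add: h \<theta>_def algebra_simps)
  obtain R \<phi> where R: "R > 0" "w = polar u R \<phi>" using polar_exists[OF assms(2)] by blast
  define s where "s = \<lfloor>\<phi> / \<theta> + 1/2\<rfloor>"
  define d where "d = \<phi> - of_int s * \<theta>"
  have "of_int s \<le> \<phi> / \<theta> + 1/2" "\<phi> / \<theta> + 1/2 < of_int s + 1" unfolding s_def by linarith+
  then have d: "- \<theta> / 2 \<le> d" "d < \<theta> / 2" using \<theta> by (simp_all add: d_def field_simps)
  show ?thesis
  proof (cases "\<bar>d\<bar> \<le> \<theta> / 4")
    case True
    have "w = polar u R (of_int s * \<theta> + d)" using R by (simp add: d_def)
    then show ?thesis using near_bisector_mod[OF m R(1), of d u s] True by (auto simp: \<theta>_def)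
  next
    case False
    obtain s' e where e: "\<bar>e\<bar> \<le> \<theta> / 4" "\<phi> + pi = of_int s' * \<theta> + e"
    proof (cases "d > 0")
      case True
      show ?thesis
      proof (rule that)
        show "\<bar>d - \<theta> / 2\<bar> \<le> \<theta> / 4" using False True d by (simp add: abs_le_iff)
        show "\<phi> + pi = of_int (s + int h + 1) * \<theta> + (d - \<theta> / 2)"
          by (simp add: pi_eq d_def algebra_simps)
      qed
    next
      case False': False
      show ?thesis
      proof (rule that)
        show "\<bar>d + \<theta> / 2\<bar> \<le> \<theta> / 4" using False False' d by (simp add: abs_le_iff)
        show "\<phi> + pi = of_int (s + int h) * \<theta> + (d + \<theta> / 2)"
          by (simp add: pi_eq d_def algebra_simps)
      qed
    qed
    have "u = polar w R (of_int s' * \<theta> + e)" using polar_opposite[OF R(2)] e(2) by simp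
    then show ?thesis using near_bisector_mod[OF m R(1), of e w s'] e(1) by (auto simp: \<theta>_def)
  qed
qed

lemma sin_cos_cone_bound:
  fixes p c :: real
  assumes "\<bar>p\<bar> \<le> c" and "c < pi / 2"
  shows "\<bar>sin p\<bar> * cos c \<le> cos p * sin c"
proof -
  have "\<bar>sin p\<bar> = sin \<bar>p\<bar>"
    using assms sin_ge_zero[of p] sin_ge_zero[of "- p"] by (cases "p \<ge> 0") auto
  moreover have "cos p = cos \<bar>p\<bar>" by (cases "p \<ge> 0") auto
  moreover have "0 \<le> sin (c - \<bar>p\<bar>)" using assms by (intro sin_ge_zero) auto
  ultimately show ?thesis by (simp add: sin_diff mult.commute)
qed

lemma cone_norm_bound:
  fixes a b \<alpha> :: real
  assumes "cos \<alpha> > 0" and "b \<ge> 0" and "\<bar>a\<bar> * cos \<alpha> \<le> b * sin \<alpha>"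
  shows "sqrt (a\<^sup>2 + b\<^sup>2) \<le> b / cos \<alpha>"
proof -
  have "(\<bar>a\<bar> * cos \<alpha>)\<^sup>2 \<le> (b * sin \<alpha>)\<^sup>2" using assms by (intro power_mono) auto
  then have "(a\<^sup>2 + b\<^sup>2) * (cos \<alpha>)\<^sup>2 \<le> b\<^sup>2"
    using sin_squared_eq[of \<alpha>] by (simp add: power_mult_distrib algebra_simps)
  then have "a\<^sup>2 + b\<^sup>2 \<le> (b / cos \<alpha>)\<^sup>2" using assms(1) by (simp add: power_divide field_simps)
  then have "sqrt (a\<^sup>2 + b\<^sup>2) \<le> sqrt ((b / cos \<alpha>)\<^sup>2)" by (rule real_sqrt_le_mono)
  then show ?thesis using assms(1,2) by simp
qed

(* For (x, y) in the cone of half-angle beta, |(x, y)| - |x| is minimal on the cone boundary,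
   where it equals y (1 - sin beta) / cos beta. *)
lemma cone_gap:
  fixes x y \<beta> :: real
  assumes "cos \<beta> > 0" and "y > 0" and "\<bar>x\<bar> * cos \<beta> \<le> y * sin \<beta>"
  shows "y * (1 - sin \<beta>) / cos \<beta> \<le> sqrt (x\<^sup>2 + y\<^sup>2) - \<bar>x\<bar>"
proof -
  define N where "N = sqrt (x\<^sup>2 + y\<^sup>2)"
  define k where "k = y * sin \<beta> / cos \<beta>"
  define M where "M = y / cos \<beta>"
  have xk: "\<bar>x\<bar> \<le> k" using assms by (simp add: k_def field_simps)
  have M: "M = sqrt (k\<^sup>2 + y\<^sup>2)"
  proof -
    have "k\<^sup>2 + y\<^sup>2 = M\<^sup>2"
      using assms(1) by (simp add: k_def M_def power_divide power_mult_distrib field_simps)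
        (simp flip: distrib_left)
    then show ?thesis using assms(1,2) by (simp add: M_def)
  qed
  have "N > 0" using assms(2) by (simp add: N_def sum_power2_gt_zero_iff)
  then have N_pos: "N + \<bar>x\<bar> > 0" by simp
  have "x\<^sup>2 \<le> k\<^sup>2" using power_mono[OF xk abs_ge_zero, of 2] by simp
  then have "N \<le> M" unfolding M N_def by (intro real_sqrt_le_mono) simp
  then have le: "N + \<bar>x\<bar> \<le> M + k" using xk by simp
  have "(M - k) * (M + k) = y\<^sup>2"
    by (simp add: M algebra_simps flip: power2_eq_square)
  then have "M - k = y\<^sup>2 / (M + k)" using N_pos le by (simp add: field_simps)
  also have "\<dots> \<le> y\<^sup>2 / (N + \<bar>x\<bar>)" using N_pos le by (intro divide_left_mono) auto
  also have "\<dots> = N - \<bar>x\<bar>"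
  proof -
    have "(N - \<bar>x\<bar>) * (N + \<bar>x\<bar>) = y\<^sup>2"
      by (simp add: N_def algebra_simps flip: power2_eq_square)
    then show ?thesis using N_pos by (simp add: field_simps)
  qed
  finally have "M - k \<le> N - \<bar>x\<bar>" .
  then show ?thesis using assms(1) by (simp add: N_def M_def k_def diff_divide_distrib right_diff_distrib)
qed

(* Writing
   w - v as a convex combination of a horizontal vector and w and using the two bounds above
   gives |v| + t |vw| <= t |w| whenever cos beta + t sin(alpha + beta) <= t cos alpha. *)
lemma cone_step_inequality:
  fixes v w :: "real \<times> real" and \<alpha> \<beta> t :: real
  assumes "cos \<alpha> > 0" and "cos \<beta> > 0" and "t > 0"
    and key: "cos \<beta> + t * sin (\<alpha> + \<beta>) \<le> t * cos \<alpha>"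
    and v: "\<bar>fst v\<bar> * cos \<alpha> \<le> snd v * sin \<alpha>" "0 < snd v" "snd v \<le> snd w"
    and w: "\<bar>fst w\<bar> * cos \<beta> \<le> snd w * sin \<beta>"
  shows "norm v + t * dist v w \<le> t * norm w"
proof -
  obtain a b x y where vw: "v = (a, b)" "w = (x, y)" by (cases v, cases w)
  have b: "0 < b" "b \<le> y" and y: "y > 0" using v vw by auto
  define N where "N = norm w"
  define l where "l = b / y"
  define q where "q = a * y / b"
  have l: "0 < l" "l \<le> 1" using b y by (auto simp: l_def)
  have norm_v: "norm v \<le> b / cos \<alpha>"
    using cone_norm_bound[of \<alpha> b a] assms(1) v b vw by (simp add: norm_Pair)
  have dist_vw: "dist v w \<le> l * \<bar>x - q\<bar> + (1 - l) * N"
  proof -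
    have "w - v = l *\<^sub>R (x - q, 0) + (1 - l) *\<^sub>R w"
      using b y by (simp add: vw l_def q_def field_simps)
    then have "dist v w \<le> norm (l *\<^sub>R (x - q, 0::real)) + norm ((1 - l) *\<^sub>R w)"
      by (metis dist_commute dist_norm norm_triangle_ineq)
    then show ?thesis using l by (simp add: N_def norm_Pair abs_mult)
  qed
  have q: "\<bar>q\<bar> \<le> y * sin \<alpha> / cos \<alpha>"
  proof -
    have "\<bar>q\<bar> * cos \<alpha> = (\<bar>a\<bar> * cos \<alpha>) * y / b" using b y by (simp add: q_def abs_mult)
    also have "\<dots> \<le> (b * sin \<alpha>) * y / b" using v vw y b by (intro divide_right_mono mult_right_mono) auto
    finally show ?thesis using b assms(1) by (simp add: field_simps)
  qed
  have far: "y / cos \<alpha> + t * \<bar>x\<bar> + t * (y * sin \<alpha> / cos \<alpha>) \<le> t * N"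
  proof -
    have "y * (cos \<beta> + t * sin (\<alpha> + \<beta>)) \<le> y * (t * cos \<alpha>)"
      using key y by (intro mult_left_mono) auto
    then have "y / cos \<alpha> + t * (y * sin \<alpha> / cos \<alpha>) \<le> t * (y * (1 - sin \<beta>) / cos \<beta>)"
      using assms(1,2) by (simp add: sin_add field_simps)
    also have "\<dots> \<le> t * (N - \<bar>x\<bar>)"
    proof -
      have "y * (1 - sin \<beta>) / cos \<beta> \<le> N - \<bar>x\<bar>"
        using cone_gap[of \<beta> y x] assms(2) w y vw by (simp add: N_def norm_Pair)
      then show ?thesis using \<open>t > 0\<close> by (intro mult_left_mono) auto
    qed
    finally show ?thesis by (simp add: algebra_simps)
  qed
  have "norm v + t * dist v w \<le> b / cos \<alpha> + t * (l * (\<bar>x\<bar> + y * sin \<alpha> / cos \<alpha>) + (1 - l) * N)"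
  proof -
    have "\<bar>x - q\<bar> \<le> \<bar>x\<bar> + y * sin \<alpha> / cos \<alpha>" using q abs_triangle_ineq4[of x q] by linarith
    then have "l * \<bar>x - q\<bar> \<le> l * (\<bar>x\<bar> + y * sin \<alpha> / cos \<alpha>)" using l by (intro mult_left_mono) auto
    then have "dist v w \<le> l * (\<bar>x\<bar> + y * sin \<alpha> / cos \<alpha>) + (1 - l) * N" using dist_vw by linarith
    then show ?thesis using norm_v \<open>t > 0\<close> by (intro add_mono mult_left_mono) auto
  qed
  also have "\<dots> = l * (y / cos \<alpha> + t * \<bar>x\<bar> + t * (y * sin \<alpha> / cos \<alpha>)) + (1 - l) * (t * N)"
    using y by (simp add: l_def field_simps)
  also have "\<dots> \<le> l * (t * N) + (1 - l) * (t * N)"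
    using far l \<open>t > 0\<close> by (intro add_mono mult_left_mono) auto
  finally show ?thesis by (simp add: N_def algebra_simps)
qed

definition stretch_factor :: "real \<Rightarrow> real" where
  "stretch_factor \<theta> = cos (\<theta> / 4) / (cos (\<theta> / 2) - sin (3 * \<theta> / 4))"

lemma stretch_factor_equation:
  assumes "0 < \<theta>" and "\<theta> < 2 * pi / 5"
  shows "stretch_factor \<theta> > 0"
    and "cos (\<theta> / 4) + stretch_factor \<theta> * sin (\<theta> / 2 + \<theta> / 4) = stretch_factor \<theta> * cos (\<theta> / 2)"
proof -
  have "sin (3 * \<theta> / 4) < sin (pi / 2 - \<theta> / 2)"
    using assms by (intro sin_monotone_2pi) (auto simp: field_simps)
  then have D: "cos (\<theta> / 2) - sin (3 * \<theta> / 4) > 0" by (simp add: sin_cos_eq)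
  moreover have "cos (\<theta> / 4) > 0" using assms by (intro cos_gt_zero_pi) auto
  ultimately show "stretch_factor \<theta> > 0" by (simp add: stretch_factor_def)
  have "\<theta> / 2 + \<theta> / 4 = 3 * \<theta> / 4" by simp
  then show "cos (\<theta> / 4) + stretch_factor \<theta> * sin (\<theta> / 2 + \<theta> / 4) = stretch_factor \<theta> * cos (\<theta> / 2)"
    using D by (simp add: stretch_factor_def field_simps)
qed

lemma polar_step_inequality:
  assumes "0 < \<theta>" and "\<theta> < 2 * pi / 5" and "r > 0" and "R > 0"
    and \<psi>: "\<bar>\<psi> - \<beta>\<bar> \<le> \<theta> / 2" and \<phi>: "\<bar>\<phi> - \<beta>\<bar> \<le> \<theta> / 4"
    and proj: "r * cos (\<psi> - \<beta>) \<le> R * cos (\<phi> - \<beta>)"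
  shows "dist u (polar u r \<psi>) + stretch_factor \<theta> * dist (polar u r \<psi>) (polar u R \<phi>)
           \<le> stretch_factor \<theta> * dist u (polar u R \<phi>)"
proof -
  define v where "v = polar 0 r (\<psi> - \<beta>)"
  define w where "w = polar 0 R (\<phi> - \<beta>)"
  have small: "\<theta> / 2 < pi / 2" and small4: "\<theta> / 4 < pi / 2" using assms(1,2) pi_gt_zero by linarith+
  have "\<bar>\<psi> - \<beta>\<bar> < pi / 2" using \<psi> small by linarith
  then have "cos (\<psi> - \<beta>) > 0" unfolding abs_less_iff by (intro cos_gt_zero_pi) linarith+
  then have "0 < snd v" using \<open>r > 0\<close> by (simp add: v_def polar_def)
  moreover have "\<bar>fst v\<bar> * cos (\<theta> / 2) \<le> snd v * sin (\<theta> / 2)"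
    using sin_cos_cone_bound[OF \<psi> small] \<open>r > 0\<close>
    by (simp add: v_def polar_def abs_mult mult.assoc mult_left_mono)
  moreover have "\<bar>fst w\<bar> * cos (\<theta> / 4) \<le> snd w * sin (\<theta> / 4)"
    using sin_cos_cone_bound[OF \<phi> small4] \<open>R > 0\<close>
    by (simp add: w_def polar_def abs_mult mult.assoc mult_left_mono)
  moreover have "snd v \<le> snd w" using proj by (simp add: v_def w_def polar_def)
  moreover have "cos (\<theta> / 2) > 0" "cos (\<theta> / 4) > 0" using assms(1) small by (auto intro!: cos_gt_zero_pi)
  ultimately have "norm v + stretch_factor \<theta> * dist v w \<le> stretch_factor \<theta> * norm w"
    using stretch_factor_equation[OF assms(1,2)] by (intro cone_step_inequality) auto
  moreover have "norm v = r" "norm w = R"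
    using dist_polar_center[of 0] assms(3,4) by (simp_all add: v_def w_def flip: dist_0_norm)
  ultimately show ?thesis
    using dist_polar_center[of u] dist_polar_rotate[of u r \<psi> R \<phi> 0 \<beta>] assms(3,4)
    by (simp add: v_def w_def)
qed

(* For m >= 6 the cone angle is below 2 pi / 5, which keeps all half-angles acute. *)
lemma theta_bounds: "m \<ge> 6 \<Longrightarrow> 0 < theta m \<and> theta m < 2 * pi / 5"
  by (auto simp: theta_def field_simps)

lemma theta_greedy_step:
  assumes "m \<ge> 6" and "finite P" and "p \<in> P" and "q \<in> P" and "i < m" and "near_bisector m p i q"
  shows "greedy_step (theta_graph m P) P (stretch_factor (theta m)) p q"
proof -
  have \<theta>: "0 < theta m" "theta m < 2 * pi / 5" using theta_bounds[OF assms(1)] by auto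
  obtain R \<phi> where R: "R > 0" "\<bar>\<phi> - real i * theta m\<bar> \<le> theta m / 4" "q = polar p R \<phi>"
    using assms(6) unfolding near_bisector_def by blast
  define S where "S = {z \<in> P. in_cone m p i z}"
  define v where "v = arg_min_on (bis_proj m p i) S"
  have "q \<in> S" using near_bisector_in_cone[of m p i q] assms by (simp add: S_def)
  moreover have "finite S" using assms(2) by (simp add: S_def)
  ultimately have v: "v \<in> S" "\<forall>z\<in>S. bis_proj m p i v \<le> bis_proj m p i z"
    using arg_min_if_finite[of S "bis_proj m p i"] by (auto simp: v_def not_less)
  then have "theta_arc m P p v"
    using assms(3,5) unfolding theta_arc_def S_def by blast
  from v(1) obtain r \<psi> where r: "r > 0" "(real i - 1/2) * theta m \<le> \<psi>" "\<psi> < (real i + 1/2) * theta m"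
    "v = polar p r \<psi>"
    unfolding S_def in_cone_def polar_def by blast
  have "bis_proj m p i v \<le> bis_proj m p i q" using v(2) \<open>q \<in> S\<close> by blast
  then have proj: "r * cos (\<psi> - real i * theta m) \<le> R * cos (\<phi> - real i * theta m)"
    by (simp only: r(4) R(3) bis_proj_polar)
  have "\<bar>\<psi> - real i * theta m\<bar> \<le> theta m / 2"
    unfolding abs_le_iff using r(2,3) by (simp add: algebra_simps)
  then have "dist p v + stretch_factor (theta m) * dist v q \<le> stretch_factor (theta m) * dist p q"
    using polar_step_inequality[OF \<theta> r(1) R(1) _ R(2) proj] by (simp add: r(4) R(3))
  moreover have "v \<noteq> p" using dist_polar_center[of p r \<psi>] r by auto
  moreover have "v \<in> P" using v(1) by (simp add: S_def)
  ultimately show ?thesis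
    using \<open>theta_arc m P p v\<close> unfolding greedy_step_def theta_graph_def by blast
qed

theorem mainTheorem13:
  fixes k m :: nat and P :: "(real \<times> real) set"
  assumes "k \<ge> 1" and "m = 4 * k + 3 \<or> m = 4 * k + 5"
    and "finite P" and "general_position m P"
  shows "is_spanner (theta_graph m P) P
           (cos (theta m / 4) / (cos (theta m / 2) - sin (3 * theta m / 4)))"
proof -
  have m: "odd m" "m \<ge> 6" using assms(1,2) by auto
  have \<theta>: "0 < theta m" "theta m < 2 * pi / 5" using theta_bounds[OF m(2)] by auto
  have "is_spanner (theta_graph m P) P (stretch_factor (theta m))"
  proof (rule greedy_step_spanner[OF assms(3) stretch_factor_equation(1)[OF \<theta>]])
    show "\<And>a b. theta_graph m P a b \<Longrightarrow> theta_graph m P b a" by (auto simp: theta_graph_def)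
    fix u w assume "u \<in> P" "w \<in> P" "u \<noteq> w"
    then show "greedy_step (theta_graph m P) P (stretch_factor (theta m)) u w
             \<or> greedy_step (theta_graph m P) P (stretch_factor (theta m)) w u"
      using near_bisector_either[OF m(1)] theta_greedy_step[OF m(2) assms(3)] by blast
  qed
  then show ?thesis by (simp add: stretch_factor_def)
qed

end
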